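(* Let $l\subset\mathbb{P}^3$ be a fixed line and let $r_t$, $t\in\Delta$, be an analytic family of lines in $\mathbb{P}^3$, where $\Delta\subset\mathbb{C}$ is a disk around $0$, such that $l$ and $r_t$ are skew for $t\neq 0$ and $l$ and $r_0$ meet at a point $p$. Let $m,n$ be positive integers. If $F\in\mathbb{C}[[t]][X,Y,Z,W]$ is the equation of an analytic family of surfaces $F_t$ such that for every $t\in\Delta\setminus\{0\}$, $F_t$ has multiplicity at least $m$ along $l$ and at least $n$ along $r_t$, then $F_0$ has multiplicity at least $m$ along $l$, at least $n$ along $r_0$, and at least $m+n$ at $p$. *)

theory Defs
  imports "HOL-Analysis.Analysis"
begin

text \<open>Homogeneous coordinates X,Y,Z,W of P^3 are the four components of a vector
  in complex^4.  A homogeneous polynomial of degree d is given by its coefficients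
  on the monomials x^alpha with alpha of total degree d.\<close>

definition monoms_deg :: "nat \<Rightarrow> (4 \<Rightarrow> nat) set" where
  "monoms_deg d = {\<alpha>. sum \<alpha> UNIV = d}"

definition hpoly_eval :: "nat \<Rightarrow> ((4 \<Rightarrow> nat) \<Rightarrow> complex) \<Rightarrow> complex^4 \<Rightarrow> complex" where
  "hpoly_eval d c x = (\<Sum>\<alpha>\<in>monoms_deg d. c \<alpha> * (\<Prod>i\<in>UNIV. (x$i) ^ (\<alpha> i)))"

definition pderiv4 :: "4 \<Rightarrow> (complex^4 \<Rightarrow> complex) \<Rightarrow> complex^4 \<Rightarrow> complex" where
  "pderiv4 i f x = deriv (\<lambda>s. f (x + s *s axis i 1)) 0"

definition iter_pderiv :: "4 list \<Rightarrow> (complex^4 \<Rightarrow> complex) \<Rightarrow> complex^4 \<Rightarrow> complex" where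
  "iter_pderiv is f = foldr pderiv4 is f"

definition mult_at_least :: "(complex^4 \<Rightarrow> complex) \<Rightarrow> complex^4 \<Rightarrow> nat \<Rightarrow> bool" where
  "mult_at_least f p m \<longleftrightarrow> (\<forall>is. length is < m \<longrightarrow> iter_pderiv is f p = 0)"

text \<open>Complex linear span of two vectors (the affine cone over a projective line)
  and complex linear independence of two vectors.\<close>
definition cspan2 :: "complex^4 \<Rightarrow> complex^4 \<Rightarrow> (complex^4) set" where
  "cspan2 u v = {\<alpha> *s u + \<beta> *s v | \<alpha> \<beta>. True}"

definition cindep2 :: "complex^4 \<Rightarrow> complex^4 \<Rightarrow> bool" where
  "cindep2 u v \<longleftrightarrow> (\<forall>\<alpha> \<beta>. \<alpha> *s u + \<beta> *s v = 0 \<longrightarrow> \<alpha> = 0 \<and> \<beta> = 0)"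

definition mult_along_line :: "(complex^4 \<Rightarrow> complex) \<Rightarrow> complex^4 \<Rightarrow> complex^4 \<Rightarrow> nat \<Rightarrow> bool" where
  "mult_along_line f u v m \<longleftrightarrow> (\<forall>x \<in> cspan2 u v - {0}. mult_at_least f x m)"

end

theory Submission
  imports Defs "HOL-Computational_Algebra.Polynomial"
begin

text \<open>For t \<noteq> 0 and a direction w, Cramer's rule with D t = det(u, v, a t, b t), which is nonzero
  exactly when l and r_t are skew, gives a point z t on r_t such that z t - D t w lies on l.
  Restricted to the line through z t in direction w, F_t is a polynomial in s with a zero of order
  at least n at s = 0 and one of order at least m at s = -D t. As t \<rightarrow> 0 both zeros tend to 0 and
  z t tends to a multiple of p; since the coefficients depend continuously on t, the limit polynomial
  vanishes to order m + n at 0. Hence all directional derivatives of F_0 at p of order < m + n vanish,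
  first for generic w and then for all w by continuity, which is multiplicity m + n at p.
  Multiplicity along l and along r_0 are closed conditions and pass to the limit directly.\<close>

section \<open>Polynomial families with coefficients continuous at 0\<close>

text \<open>Instead of coefficient vectors, families are described by how they are built, so that every
  property needed below is a rule induction.\<close>

inductive_set poly_family :: "(complex \<Rightarrow> complex^4 \<Rightarrow> complex) set" where
  const: "continuous (at 0) \<phi> \<Longrightarrow> (\<lambda>t x. \<phi> t) \<in> poly_family"
| coord: "(\<lambda>t x. x $ i) \<in> poly_family"
| add: "F \<in> poly_family \<Longrightarrow> G \<in> poly_family \<Longrightarrow> (\<lambda>t x. F t x + G t x) \<in> poly_family"
| mult: "F \<in> poly_family \<Longrightarrow> G \<in> poly_family \<Longrightarrow> (\<lambda>t x. F t x * G t x) \<in> poly_family"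

lemma sum_axis_mult: "(\<Sum>j\<in>UNIV. axis i (1::complex) $ j * g j) = g i"
proof -
  have "(\<Sum>j\<in>UNIV. axis i (1::complex) $ j * g j) = (\<Sum>j\<in>UNIV. if j = i then g j else 0)"
    by (rule sum.cong) (auto simp: axis_def)
  then show ?thesis by simp
qed

lemma poly_family_has_derivative_along_lines:
  assumes "F \<in> poly_family"
  shows "\<exists>D. (\<forall>i. D i \<in> poly_family) \<and> (\<forall>t x w s. ((\<lambda>s. F t (x + s *s w)) has_field_derivative
            (\<Sum>i\<in>UNIV. w$i * D i t (x + s *s w))) (at s))"
  using assms
proof induction
  case (const \<phi>)
  show ?case
    by (rule exI[of _ "\<lambda>i t x. 0"]) (auto intro: poly_family.const)
next
  case (coord i)
  let ?D = "\<lambda>j t (x::complex^4). if j = i then (1::complex) else 0"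
  have "?D j \<in> poly_family" for j
    using poly_family.const[of "\<lambda>t. if j = i then (1::complex) else 0"] by simp
  moreover have "((\<lambda>s. (x + s *s w) $ i) has_field_derivative (\<Sum>j\<in>UNIV. w$j * ?D j t (x + s *s w))) (at s)"
    for t x w s
    by (auto intro!: derivative_eq_intros simp: if_distrib cong: if_cong)
  ultimately show ?case by (intro exI[of _ ?D]) blast
next
  case (add F G)
  then obtain DF DG where
    F: "\<forall>i. DF i \<in> poly_family" "\<forall>t x w s. ((\<lambda>s. F t (x + s *s w)) has_field_derivative
            (\<Sum>i\<in>UNIV. w$i * DF i t (x + s *s w))) (at s)"
    and G: "\<forall>i. DG i \<in> poly_family" "\<forall>t x w s. ((\<lambda>s. G t (x + s *s w)) has_field_derivative
            (\<Sum>i\<in>UNIV. w$i * DG i t (x + s *s w))) (at s)" by blast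
  show ?case
    using F G DERIV_add[OF F(2)[rule_format] G(2)[rule_format]]
    by (intro exI[of _ "\<lambda>i t x. DF i t x + DG i t x"])
      (auto intro!: poly_family.add simp: distrib_left sum.distrib)
next
  case (mult F G)
  then obtain DF DG where
    F: "\<forall>i. DF i \<in> poly_family" "\<forall>t x w s. ((\<lambda>s. F t (x + s *s w)) has_field_derivative
            (\<Sum>i\<in>UNIV. w$i * DF i t (x + s *s w))) (at s)"
    and G: "\<forall>i. DG i \<in> poly_family" "\<forall>t x w s. ((\<lambda>s. G t (x + s *s w)) has_field_derivative
            (\<Sum>i\<in>UNIV. w$i * DG i t (x + s *s w))) (at s)" by blast
  let ?D = "\<lambda>i t x. DF i t x * G t x + F t x * DG i t x"
  have "?D i \<in> poly_family" for i
    using F G mult.hyps by (auto intro!: poly_family.add poly_family.mult)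
  moreover have "((\<lambda>s. F t (x + s *s w) * G t (x + s *s w)) has_field_derivative
      (\<Sum>i\<in>UNIV. w$i * ?D i t (x + s *s w))) (at s)" for t x w s
    using DERIV_mult[OF F(2)[rule_format, of t x w s] G(2)[rule_format, of t x w s]]
    by (simp add: distrib_left sum.distrib sum_distrib_left sum_distrib_right algebra_simps)
  ultimately show ?case by (intro exI[of _ ?D]) blast
qed

lemma
  assumes "F \<in> poly_family"
  shows poly_family_pderiv4: "(\<lambda>t. pderiv4 i (F t)) \<in> poly_family"
    and has_field_derivative_along_line: "((\<lambda>s. F t (x + s *s w)) has_field_derivative
            (\<Sum>i\<in>UNIV. w$i * pderiv4 i (F t) (x + s *s w))) (at s)"
proof -
  obtain D where D: "\<forall>i. D i \<in> poly_family" "\<forall>t x w s. ((\<lambda>s. F t (x + s *s w)) has_field_derivative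
            (\<Sum>i\<in>UNIV. w$i * D i t (x + s *s w))) (at s)"
    using poly_family_has_derivative_along_lines[OF assms] by blast
  have D_eq: "pderiv4 i (F t) = D i t" for i t
  proof
    fix y
    have "deriv (\<lambda>s. F t (y + s *s axis i 1)) 0 = (\<Sum>j\<in>UNIV. axis i 1 $ j * D j t (y + 0 *s axis i 1))"
      by (rule DERIV_imp_deriv) (use D in blast)
    then show "pderiv4 i (F t) y = D i t y" by (simp add: pderiv4_def sum_axis_mult)
  qed
  then show "(\<lambda>t. pderiv4 i (F t)) \<in> poly_family"
    and "((\<lambda>s. F t (x + s *s w)) has_field_derivative
            (\<Sum>i\<in>UNIV. w$i * pderiv4 i (F t) (x + s *s w))) (at s)"
    using D by (simp_all add: D_eq)
qed

lemma iter_pderiv_Nil [simp]: "iter_pderiv [] f = f"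
  by (simp add: iter_pderiv_def)

lemma iter_pderiv_Cons [simp]: "iter_pderiv (i # is) f = pderiv4 i (iter_pderiv is f)"
  by (simp add: iter_pderiv_def)

lemma poly_family_iter_pderiv:
  assumes "F \<in> poly_family"
  shows "(\<lambda>t. iter_pderiv is (F t)) \<in> poly_family"
  by (induction "is") (simp_all add: assms poly_family_pderiv4)

lemma poly_family_continuous_at:
  assumes "F \<in> poly_family" and "\<And>i. continuous (at 0) (\<lambda>t. y t $ i)"
  shows "continuous (at 0) (\<lambda>t. F t (y t))"
  using assms(1) by induction (simp_all add: assms(2) continuous_intros)

lemma poly_family_constant: "(\<lambda>t x. c) \<in> poly_family"
  using poly_family.const[of "\<lambda>t. c"] by simp

lemma poly_family_sum:
  assumes "\<And>a. a \<in> A \<Longrightarrow> (\<lambda>t x. F a t x) \<in> poly_family"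
  shows "(\<lambda>t x. \<Sum>a\<in>A. F a t x) \<in> poly_family"
  using assms
proof (induction A rule: infinite_finite_induct)
  case (insert a A)
  then show ?case using poly_family.add[of "\<lambda>t x. F a t x" "\<lambda>t x. \<Sum>a\<in>A. F a t x"] by simp
qed (simp_all add: poly_family_constant)

lemma poly_family_prod:
  assumes "\<And>a. a \<in> A \<Longrightarrow> (\<lambda>t x. F a t x) \<in> poly_family"
  shows "(\<lambda>t x. \<Prod>a\<in>A. F a t x) \<in> poly_family"
  using assms
proof (induction A rule: infinite_finite_induct)
  case (insert a A)
  then show ?case using poly_family.mult[of "\<lambda>t x. F a t x" "\<lambda>t x. \<Prod>a\<in>A. F a t x"] by simp
qed (simp_all add: poly_family_constant)

lemma poly_family_power:
  assumes "F \<in> poly_family"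
  shows "(\<lambda>t x. F t x ^ k) \<in> poly_family"
  by (induction k) (simp_all add: poly_family_constant poly_family.mult[OF assms])

lemma poly_family_hpoly_eval:
  assumes "\<And>\<alpha>. continuous (at 0) (c \<alpha>)"
  shows "(\<lambda>t. hpoly_eval d (\<lambda>\<alpha>. c \<alpha> t)) \<in> poly_family"
  unfolding hpoly_eval_def
  by (intro poly_family_sum poly_family.mult poly_family.const assms poly_family_prod
      poly_family_power poly_family.coord)

lemma poly_family_prod_list_coords: "(\<lambda>t x. prod_list (map (\<lambda>i. x $ i) is)) \<in> poly_family"
  by (induction "is") (simp_all add: poly_family_constant poly_family.mult[OF poly_family.coord])

lemma poly_family_affine_substitution:
  assumes "F \<in> poly_family"
  shows "(\<lambda>t x. F t (y + c *s x)) \<in> poly_family"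
  using assms
proof induction
  case (coord i)
  have "(\<lambda>t x. (\<lambda>t x. y $ i) t x + (\<lambda>t x. c * x $ i) t x) \<in> poly_family"
    by (intro poly_family.add poly_family.mult poly_family_constant poly_family.coord)
  then show ?case by simp
qed (use poly_family.intros in auto)

lemma poly_family_fixed_parameter:
  assumes "F \<in> poly_family"
  shows "(\<lambda>t' x. F t x) \<in> poly_family"
  using assms by induction (use poly_family.intros poly_family_constant in auto)

section \<open>Directional derivatives\<close>

text \<open>The j-th derivative of s \<mapsto> f (x + s w) at s = 0, as a polynomial in w
  (see higher_deriv_along_line).\<close>

definition dir_deriv :: "(complex^4 \<Rightarrow> complex) \<Rightarrow> nat \<Rightarrow> complex^4 \<Rightarrow> complex^4 \<Rightarrow> complex" where
  "dir_deriv f j x w = (\<Sum>is | length is = j. prod_list (map (\<lambda>i. w $ i) is) * iter_pderiv is f x)"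

lemma sum_lists_length_Suc:
  "(\<Sum>is | length is = Suc j. g is) = (\<Sum>is | length is = j. \<Sum>i\<in>(UNIV::4 set). g (i # is))"
proof -
  have "{is. length is = Suc j} = (\<lambda>(is, i::4). i # is) ` ({is. length is = j} \<times> UNIV)"
    using lists_length_Suc_eq[of "UNIV::4 set" j] by simp
  then have "(\<Sum>is | length is = Suc j. g is)
      = (\<Sum>p\<in>{is. length is = j} \<times> UNIV. g ((\<lambda>(is, i). i # is) p))"
    by (simp add: sum.reindex[OF inj_split_Cons])
  also have "\<dots> = (\<Sum>is | length is = j. \<Sum>i\<in>UNIV. g (i # is))"
    by (simp add: sum.cartesian_product split_def)
  finally show ?thesis .
qed

lemma higher_deriv_along_line:
  assumes "F \<in> poly_family"
  shows "(deriv ^^ j) (\<lambda>s. F t (x + s *s w)) = (\<lambda>s. dir_deriv (F t) j (x + s *s w) w)"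
proof (induction j)
  case 0
  have "{is::4 list. length is = 0} = {[]}" by auto
  then show ?case by (simp add: dir_deriv_def)
next
  case (Suc j)
  have "((\<lambda>s. dir_deriv (F t) j (x + s *s w) w) has_field_derivative
      dir_deriv (F t) (Suc j) (x + s *s w) w) (at s)" for s
  proof -
    have "((\<lambda>s. dir_deriv (F t) j (x + s *s w) w) has_field_derivative
      (\<Sum>is | length is = j. prod_list (map (\<lambda>i. w $ i) is) *
         (\<Sum>i\<in>UNIV. w$i * pderiv4 i (iter_pderiv is (F t)) (x + s *s w)))) (at s)"
      unfolding dir_deriv_def
      by (intro DERIV_sum DERIV_cmult has_field_derivative_along_line[OF poly_family_iter_pderiv[OF assms]])
    then show ?thesis
      by (simp add: dir_deriv_def sum_lists_length_Suc sum_distrib_left algebra_simps)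
  qed
  then show ?case
    using Suc by (auto intro: DERIV_imp_deriv)
qed

lemma dir_deriv_eq_0:
  assumes "mult_at_least f x k" "j < k"
  shows "dir_deriv f j x w = 0"
  using assms by (simp add: dir_deriv_def mult_at_least_def)

lemma dir_deriv_smult: "dir_deriv f j x (c *s w) = c ^ j * dir_deriv f j x w"
proof -
  have "prod_list (map (\<lambda>i. (c *s w) $ i) is) = c ^ length is * prod_list (map (\<lambda>i. w $ i) is)"
    for "is" :: "4 list"
    by (induction "is") (simp_all add: mult_ac)
  then show ?thesis
    by (simp add: dir_deriv_def sum_distrib_left mult.assoc)
qed

lemma poly_family_dir_deriv:
  assumes "F \<in> poly_family"
  shows "(\<lambda>t x. dir_deriv (F t) j x w) \<in> poly_family"
  unfolding dir_deriv_def
  by (intro poly_family_sum poly_family.mult poly_family_constant)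
    (use poly_family_iter_pderiv[OF assms] in simp)

lemma poly_family_dir_deriv_direction: "(\<lambda>t w. dir_deriv f j x w) \<in> poly_family"
  unfolding dir_deriv_def
  by (intro poly_family_sum poly_family.mult poly_family_prod_list_coords poly_family_constant)

lemma poly_family_along_line_is_poly:
  assumes "F \<in> poly_family"
  shows "\<exists>N. \<forall>t x w. \<exists>L. degree L \<le> N \<and> (\<forall>s. F t (x + s *s w) = poly L s)"
  using assms
proof induction
  case (const \<phi>)
  show ?case by (rule exI[of _ 0]) (auto intro!: exI[of _ "[:\<phi> _:]"])
next
  case (coord i)
  have "\<exists>L. degree L \<le> 1 \<and> (\<forall>s. (x + s *s w) $ i = poly L s)" for x w
    by (rule exI[of _ "[:x$i, w$i:]"]) (auto simp: degree_pCons_le algebra_simps)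
  then show ?case by blast
next
  case (add F G)
  then obtain N1 N2 where N1: "\<forall>t x w. \<exists>L. degree L \<le> N1 \<and> (\<forall>s. F t (x + s *s w) = poly L s)"
    and N2: "\<forall>t x w. \<exists>L. degree L \<le> N2 \<and> (\<forall>s. G t (x + s *s w) = poly L s)" by blast
  have "\<exists>L. degree L \<le> max N1 N2 \<and> (\<forall>s. F t (x + s *s w) + G t (x + s *s w) = poly L s)" for t x w
  proof -
    obtain L1 L2 where "degree L1 \<le> N1" "\<forall>s. F t (x + s *s w) = poly L1 s"
      and "degree L2 \<le> N2" "\<forall>s. G t (x + s *s w) = poly L2 s" using N1 N2 by meson
    then show ?thesis by (intro exI[of _ "L1 + L2"]) (auto intro!: degree_add_le)
  qed
  then show ?case by blast
next
  case (mult F G)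
  then obtain N1 N2 where N1: "\<forall>t x w. \<exists>L. degree L \<le> N1 \<and> (\<forall>s. F t (x + s *s w) = poly L s)"
    and N2: "\<forall>t x w. \<exists>L. degree L \<le> N2 \<and> (\<forall>s. G t (x + s *s w) = poly L s)" by blast
  have "\<exists>L. degree L \<le> N1 + N2 \<and> (\<forall>s. F t (x + s *s w) * G t (x + s *s w) = poly L s)" for t x w
  proof -
    obtain L1 L2 where "degree L1 \<le> N1" "\<forall>s. F t (x + s *s w) = poly L1 s"
      and "degree L2 \<le> N2" "\<forall>s. G t (x + s *s w) = poly L2 s" using N1 N2 by meson
    moreover from this have "degree (L1 * L2) \<le> N1 + N2"
      using degree_mult_le[of L1 L2] by linarith
    ultimately show ?thesis by (intro exI[of _ "L1 * L2"]) auto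
  qed
  then show ?case by blast
qed

lemma higher_deriv_poly: "(deriv ^^ k) (poly L) = poly ((pderiv ^^ k) L)"
proof (induction k)
  case (Suc k)
  have "deriv (poly ((pderiv ^^ k) L)) = poly (pderiv ((pderiv ^^ k) L))"
    by (intro ext DERIV_imp_deriv poly_DERIV)
  then show ?case using Suc by simp
qed simp

lemma poly_higher_pderiv_0: "poly ((pderiv ^^ k) L) 0 = fact k * coeff L k"
  by (simp add: poly_0_coeff_0 coeff_higher_pderiv pochhammer_fact)

lemma coeff_along_line:
  assumes "F \<in> poly_family" "\<forall>s. F t (x + s *s w) = poly L s"
  shows "coeff L k = dir_deriv (F t) k x w / fact k"
proof -
  have "poly L = (\<lambda>s. F t (x + s *s w))" using assms(2) by auto
  then have "(deriv ^^ k) (poly L) 0 = dir_deriv (F t) k x w"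
    by (simp add: higher_deriv_along_line[OF assms(1)])
  then show ?thesis by (simp add: higher_deriv_poly poly_higher_pderiv_0 field_simps)
qed

lemma poly_eq_sum_coeffs:
  fixes L :: "'a::comm_semiring_1 poly"
  assumes "degree L \<le> N"
  shows "poly L s = (\<Sum>i\<le>N. coeff L i * s ^ i)"
proof -
  have "(\<Sum>i\<le>degree L. coeff L i * s ^ i) = (\<Sum>i\<le>N. coeff L i * s ^ i)"
    by (rule sum.mono_neutral_left) (use assms in \<open>auto simp: coeff_eq_0\<close>)
  then show ?thesis by (simp only: poly_altdef)
qed

lemma iter_pderiv_zero: "iter_pderiv is (\<lambda>h. 0) = (\<lambda>h. 0)"
  by (induction "is") (simp_all add: pderiv4_def)

lemma iter_pderiv_translate:
  "iter_pderiv is (\<lambda>h. f (x + h)) = (\<lambda>y. iter_pderiv is f (x + y))"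
  by (induction "is") (simp_all add: pderiv4_def add.assoc)

lemma iter_pderiv_linear_combination:
  assumes "finite J" "\<And>j. j \<in> J \<Longrightarrow> (\<lambda>t. G j) \<in> poly_family"
  shows "iter_pderiv is (\<lambda>h. \<Sum>j\<in>J. a j * G j h) = (\<lambda>y. \<Sum>j\<in>J. a j * iter_pderiv is (G j) y)"
proof (induction "is")
  case (Cons i "is")
  have "pderiv4 i (\<lambda>h. \<Sum>j\<in>J. a j * iter_pderiv is (G j) h) y
      = (\<Sum>j\<in>J. a j * pderiv4 i (iter_pderiv is (G j)) y)" for y
  proof -
    have "((\<lambda>s. \<Sum>j\<in>J. a j * iter_pderiv is (G j) (y + s *s axis i 1)) has_field_derivative
       (\<Sum>j\<in>J. a j * (\<Sum>k\<in>UNIV. axis i 1 $ k * pderiv4 k (iter_pderiv is (G j)) (y + 0 *s axis i 1))))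
       (at 0)"
      using assms(2) by (intro DERIV_sum DERIV_cmult has_field_derivative_along_line
          [OF poly_family_iter_pderiv[where F = "\<lambda>t. G _"]]) auto
    then show ?thesis
      by (simp add: pderiv4_def DERIV_imp_deriv sum_axis_mult)
  qed
  then show ?case by (simp add: Cons)
qed simp

lemma iter_pderiv_scale:
  assumes "(\<lambda>t. G) \<in> poly_family"
  shows "iter_pderiv is (\<lambda>h. G (c *s h)) = (\<lambda>y. c ^ length is * iter_pderiv is G (c *s y))"
proof (induction "is")
  case (Cons i "is")
  have "pderiv4 i (\<lambda>y. c ^ length is * iter_pderiv is G (c *s y)) y
      = c ^ length is * (c * pderiv4 i (iter_pderiv is G) (c *s y))" for y
  proof -
    have line: "c *s (y + s *s axis i 1) = c *s y + s *s (c *s axis i 1)" for s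
      by (simp add: vec_eq_iff algebra_simps)
    have "((\<lambda>s. c ^ length is * iter_pderiv is G (c *s y + s *s (c *s axis i 1))) has_field_derivative
       c ^ length is * (\<Sum>k\<in>UNIV. (c *s axis i 1) $ k * pderiv4 k (iter_pderiv is G) (c *s y + 0 *s (c *s axis i 1))))
       (at 0)"
      by (intro DERIV_cmult has_field_derivative_along_line[OF poly_family_iter_pderiv[OF assms]])
    moreover have "(\<Sum>k\<in>UNIV. (c *s axis i 1) $ k * pderiv4 k (iter_pderiv is G) (c *s y))
       = c * pderiv4 i (iter_pderiv is G) (c *s y)"
      using sum_axis_mult[of i "\<lambda>k. c * pderiv4 k (iter_pderiv is G) (c *s y)"]
      by (simp add: algebra_simps)
    ultimately show ?thesis
      unfolding pderiv4_def line by (simp add: DERIV_imp_deriv pderiv4_def)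
  qed
  then show ?case by (simp add: Cons algebra_simps)
qed simp

lemma taylor_expansion_dir_deriv:
  assumes "(\<lambda>t. f) \<in> poly_family"
  obtains N where "\<And>h. f h = (\<Sum>j\<le>N. dir_deriv f j 0 h / fact j)"
proof -
  obtain N where N: "\<forall>t y w. \<exists>L. degree L \<le> N \<and> (\<forall>s. f (y + s *s w) = poly L s)"
    using poly_family_along_line_is_poly[OF assms] by blast
  have "f h = (\<Sum>j\<le>N. dir_deriv f j 0 h / fact j)" for h
  proof -
    obtain L where L: "degree L \<le> N" "\<forall>s. f (0 + s *s h) = poly L s" using N by blast
    have "f h = poly L 1" using L(2)[rule_format, of 1] by simp
    also have "\<dots> = (\<Sum>j\<le>N. coeff L j)" using poly_eq_sum_coeffs[OF L(1), of 1] by simp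
    also have "\<dots> = (\<Sum>j\<le>N. dir_deriv f j 0 h / fact j)"
      using coeff_along_line[OF assms L(2)] by simp
    finally show ?thesis .
  qed
  then show thesis by (rule that)
qed

lemma iter_pderiv_homogeneous_at_0:
  assumes "(\<lambda>t. G) \<in> poly_family" and "\<And>h. G (2 *s h) = 2 ^ j * G h" and "length is \<noteq> j"
  shows "iter_pderiv is G 0 = 0"
proof -
  have "2 ^ length is * iter_pderiv is G 0 = iter_pderiv is (\<lambda>h. G (2 *s h)) 0"
    by (simp add: iter_pderiv_scale[OF assms(1)])
  also have "\<dots> = 2 ^ j * iter_pderiv is G 0"
    using iter_pderiv_linear_combination[of "{()}" "\<lambda>_. G" "is" "\<lambda>_. 2 ^ j"] assms(1,2) by simp
  finally have "(2 ^ length is - 2 ^ j) * iter_pderiv is G (0::complex^4) = 0"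
    by (simp add: algebra_simps)
  moreover have "(2::complex) ^ length is \<noteq> 2 ^ j"
  proof
    assume "(2::complex) ^ length is = 2 ^ j"
    then have "of_nat (2 ^ length is) = (of_nat (2 ^ j) :: complex)" by simp
    then have "(2::nat) ^ length is = 2 ^ j" by (simp only: of_nat_eq_iff)
    with assms(3) show False by simp
  qed
  ultimately show ?thesis by simp
qed

text \<open>Expand F t (x + h) = (\<Sum>j. dir_deriv (F t) j x h / fact j): the terms with j < k vanish, the others
  are homogeneous of degree j \<ge> k in h, so their partial derivatives of order < k vanish at h = 0.\<close>

lemma mult_at_least_if_dir_derivs_vanish:
  assumes F: "F \<in> poly_family" and vanish: "\<And>w j. j < k \<Longrightarrow> dir_deriv (F t) j x w = 0"
  shows "mult_at_least (F t) x k"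
  unfolding mult_at_least_def
proof (intro allI impI)
  fix "is" :: "4 list"
  assume len: "length is < k"
  define Q where "Q = (\<lambda>h. F t (x + h))"
  have Q: "(\<lambda>t'. Q) \<in> poly_family"
    using poly_family_fixed_parameter[OF poly_family_affine_substitution[OF F, of x 1]] by (simp add: Q_def)
  have dir_deriv_Q: "dir_deriv Q j 0 w = dir_deriv (F t) j x w" for j w
    by (simp add: dir_deriv_def Q_def iter_pderiv_translate)
  define D where "D j h = dir_deriv Q j 0 h" for j h
  have D: "(\<lambda>t. D j) \<in> poly_family" for j
    unfolding D_def[abs_def] by (rule poly_family_dir_deriv_direction)
  obtain N where "\<And>h. Q h = (\<Sum>j\<le>N. dir_deriv Q j 0 h / fact j)"
    using taylor_expansion_dir_deriv[OF Q] by blast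
  then have Q_eq: "Q = (\<lambda>h. \<Sum>j\<in>{..N}. (1 / fact j) * D j h)" by (simp add: D_def fun_eq_iff)
  have "iter_pderiv is (F t) x = iter_pderiv is Q 0"
    by (simp add: Q_def iter_pderiv_translate)
  also have "\<dots> = (\<Sum>j\<le>N. (1 / fact j) * iter_pderiv is (D j) 0)"
    unfolding Q_eq by (subst iter_pderiv_linear_combination) (simp_all add: D)
  also have "\<dots> = 0"
  proof (intro sum.neutral ballI)
    fix j
    have "iter_pderiv is (D j) 0 = 0"
    proof (cases "j < k")
      case True
      then have "D j = (\<lambda>h. 0)" by (simp add: D_def fun_eq_iff dir_deriv_Q vanish)
      then show ?thesis by (simp add: iter_pderiv_zero)
    next
      case False
      show ?thesis
        by (rule iter_pderiv_homogeneous_at_0[OF D, where j = j]) (use False len in \<open>simp_all add: D_def dir_deriv_smult\<close>)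
    qed
    then show "(1 / fact j) * iter_pderiv is (D j) 0 = 0" by simp
  qed
  finally show "iter_pderiv is (F t) x = 0" .
qed

section \<open>Colliding zeros\<close>

lemma higher_pderivs_vanish_iff_dvd:
  fixes L :: "'a::{idom,semiring_char_0} poly"
  shows "(\<forall>i<m. poly ((pderiv ^^ i) L) a = 0) \<longleftrightarrow> [:-a, 1:] ^ m dvd L"
proof (induction m arbitrary: L)
  case (Suc m)
  have shift: "(\<forall>i<Suc m. poly ((pderiv ^^ i) L) a = 0)
      \<longleftrightarrow> poly L a = 0 \<and> (\<forall>i<m. poly ((pderiv ^^ i) (pderiv L)) a = 0)"
    by (auto simp: All_less_Suc2 funpow_Suc_right simp del: funpow.simps)
  show ?case
  proof
    assume "\<forall>i<Suc m. poly ((pderiv ^^ i) L) a = 0"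
    then have root: "poly L a = 0" and "[:-a, 1:] ^ m dvd pderiv L"
      using shift Suc.IH by auto
    show "[:-a, 1:] ^ Suc m dvd L"
    proof (cases "L = 0 \<or> pderiv L = 0")
      case True
      then have "L = 0" using root by (auto simp: pderiv_eq_0_iff elim: degree_eq_zeroE)
      then show ?thesis by simp
    next
      case False
      then have "m \<le> order a (pderiv L)" using \<open>[:-a, 1:] ^ m dvd pderiv L\<close> order_divides by blast
      then have "Suc m \<le> order a L" using order_pderiv[OF _ root] False by simp
      then show ?thesis using order_divides by blast
    qed
  next
    assume "[:-a, 1:] ^ Suc m dvd L"
    then obtain q where q: "L = [:-a, 1:] ^ Suc m * q" by (elim dvdE)
    have "pderiv L = [:- a, 1:] ^ Suc m * pderiv q + smult (of_nat (Suc m)) (q * [:- a, 1:] ^ m)"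
      unfolding q by (rule lemma_order_pderiv1)
    then have "[:-a, 1:] ^ m dvd pderiv L"
      by (metis dvd_add dvd_mult2 dvd_refl dvd_smult dvd_triv_right power_Suc2 mult.assoc)
    moreover have "poly L a = 0" by (simp add: q)
    ultimately show "\<forall>i<Suc m. poly ((pderiv ^^ i) L) a = 0"
      using shift Suc.IH by blast
  qed
qed simp

lemma dvd_poly_shift_if_nonzero_root:
  fixes L :: "'a::{idom,semiring_char_0} poly"
  assumes "a \<noteq> 0" "\<forall>k<n. coeff L k = 0" "[:-a, 1:] ^ m dvd L"
  shows "[:-a, 1:] ^ m dvd poly_shift n L"
proof (cases "L = 0")
  case False
  have L_eq: "L = monom 1 n * poly_shift n L"
    by (rule poly_eqI) (use assms(2) in \<open>auto simp: coeff_monom_mult coeff_poly_shift\<close>)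
  have "m \<le> order a L"
    using assms(3) False order_divides by blast
  also have "\<dots> = order a (monom 1 n) + order a (poly_shift n L)"
    using False L_eq order_mult by metis
  also have "order a (monom 1 n) = 0"
    by (rule order_0I) (use assms(1) in \<open>simp add: poly_monom\<close>)
  finally show ?thesis by (simp add: order_divides)
qed simp

lemma eq_if_continuous_at_and_eventually_eq:
  fixes g :: "'a::t2_space \<Rightarrow> 'b::t2_space"
  assumes "continuous (at x) g" "at x \<noteq> bot" "eventually (\<lambda>t. g t = c) (at x)"
  shows "g x = c"
  using tendsto_unique[OF assms(2) assms(1)[unfolded continuous_at] tendsto_eventually[OF assms(3)]] .

lemma vanishing_orders_add_in_the_limit:
  fixes L :: "complex \<Rightarrow> complex poly" and \<sigma> :: "complex \<Rightarrow> complex"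
  assumes cont: "\<And>k. continuous (at 0) (\<lambda>t. coeff (L t) k)"
    and deg: "\<And>t. degree (L t) \<le> N"
    and \<sigma>_cont: "continuous (at 0) \<sigma>" and \<sigma>_0: "\<sigma> 0 = 0"
    and ev: "eventually (\<lambda>t. \<sigma> t \<noteq> 0 \<and> (\<forall>k<n. coeff (L t) k = 0) \<and>
                 (\<forall>i<m. poly ((pderiv ^^ i) (L t)) (\<sigma> t) = 0)) (at 0)"
    and k: "k < m + n"
  shows "coeff (L 0) k = 0"
proof (cases "k < n")
  case True
  show ?thesis
    by (rule eq_if_continuous_at_and_eventually_eq[OF cont at_neq_bot])
      (rule eventually_mono[OF ev], use True in auto)
next
  case False
  define i where "i = k - n"
  have i: "i < m" "k = i + n" using False k by (auto simp: i_def)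
  define \<psi> where "\<psi> t = poly_shift n (L t)" for t
  have "eventually (\<lambda>t. [:-\<sigma> t, 1:] ^ m dvd \<psi> t) (at 0)"
    by (rule eventually_mono[OF ev])
      (auto simp: \<psi>_def higher_pderivs_vanish_iff_dvd intro!: dvd_poly_shift_if_nonzero_root)
  then have \<psi>_derivs: "eventually (\<lambda>t. poly ((pderiv ^^ i) (\<psi> t)) (\<sigma> t) = 0) (at 0)"
    by (rule eventually_mono) (use i(1) higher_pderivs_vanish_iff_dvd in blast)
  \<comment> \<open>The i-th derivative of \<psi> t at \<sigma> t, written so that it is visibly continuous in t.\<close>
  define h where
    "h t = (\<Sum>j\<le>N. (pochhammer (of_nat (Suc j)) i * coeff (L t) (j + i + n)) * \<sigma> t ^ j)" for t
  have h_eq: "h t = poly ((pderiv ^^ i) (\<psi> t)) (\<sigma> t)" for t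
  proof -
    have "degree ((pderiv ^^ i) (\<psi> t)) \<le> N"
      by (rule degree_le) (use deg[of t] in \<open>auto simp: coeff_higher_pderiv \<psi>_def coeff_poly_shift coeff_eq_0\<close>)
    from poly_eq_sum_coeffs[OF this] show ?thesis
      by (simp add: h_def coeff_higher_pderiv \<psi>_def coeff_poly_shift add.assoc)
  qed
  have "h 0 = 0"
    by (rule eq_if_continuous_at_and_eventually_eq[OF _ at_neq_bot])
      (use \<psi>_derivs in \<open>simp_all add: h_eq[symmetric] h_def cont \<sigma>_cont continuous_intros\<close>)
  then have "fact i * coeff (\<psi> 0) i = 0"
    by (simp add: h_eq \<sigma>_0 poly_higher_pderiv_0)
  then show ?thesis by (simp add: \<psi>_def coeff_poly_shift i(2))
qed

lemma dir_derivs_vanish_in_the_limit: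
  assumes F: "F \<in> poly_family"
    and z_cont: "\<And>i. continuous (at 0) (\<lambda>t. z t $ i)"
    and \<sigma>_cont: "continuous (at 0) \<sigma>" and \<sigma>_0: "\<sigma> 0 = 0"
    and ev: "eventually (\<lambda>t. \<sigma> t \<noteq> 0 \<and> mult_at_least (F t) (z t) n
                   \<and> mult_at_least (F t) (z t + \<sigma> t *s w) m) (at 0)"
    and j: "j < m + n"
  shows "dir_deriv (F 0) j (z 0) w = 0"
proof -
  obtain N where N: "\<forall>t x w. \<exists>L. degree L \<le> N \<and> (\<forall>s. F t (x + s *s w) = poly L s)"
    using poly_family_along_line_is_poly[OF F] by blast
  then have "\<forall>t. \<exists>L. degree L \<le> N \<and> (\<forall>s. F t (z t + s *s w) = poly L s)" by blast
  then obtain L where L: "\<And>t. degree (L t) \<le> N" "\<And>t s. F t (z t + s *s w) = poly (L t) s"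
    using choice[of "\<lambda>t L. degree L \<le> N \<and> (\<forall>s. F t (z t + s *s w) = poly L s)"] by blast
  have coeff_L: "coeff (L t) k = dir_deriv (F t) k (z t) w / fact k" for t k
    using coeff_along_line[OF F] L(2) by blast
  have pderiv_L: "poly ((pderiv ^^ i) (L t)) s = dir_deriv (F t) i (z t + s *s w) w" for t i s
  proof -
    have "poly (L t) = (\<lambda>s. F t (z t + s *s w))" using L(2) by auto
    then show ?thesis by (metis higher_deriv_along_line[OF F] higher_deriv_poly)
  qed
  have "coeff (L 0) j = 0"
  proof (rule vanishing_orders_add_in_the_limit[OF _ L(1) \<sigma>_cont \<sigma>_0 _ j])
    show "continuous (at 0) (\<lambda>t. coeff (L t) k)" for k
      unfolding coeff_L
      by (intro continuous_intros poly_family_continuous_at[OF poly_family_dir_deriv[OF F] z_cont]) simp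
    show "eventually (\<lambda>t. \<sigma> t \<noteq> 0 \<and> (\<forall>k<n. coeff (L t) k = 0) \<and>
                 (\<forall>i<m. poly ((pderiv ^^ i) (L t)) (\<sigma> t) = 0)) (at 0)"
      by (rule eventually_mono[OF ev]) (auto simp: coeff_L pderiv_L dir_deriv_eq_0)
  qed
  then show ?thesis by (simp add: coeff_L)
qed

section \<open>Planes in complex^4\<close>

lemma mult_along_line_imp_mult_at_least:
  "mult_along_line f u v k \<Longrightarrow> x \<in> cspan2 u v \<Longrightarrow> x \<noteq> 0 \<Longrightarrow> mult_at_least f x k"
  by (simp add: mult_along_line_def)

lemma mem_cspan2: "x \<in> cspan2 u v \<longleftrightarrow> (\<exists>\<alpha> \<beta>. x = \<alpha> *s u + \<beta> *s v)"
  by (auto simp: cspan2_def)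

lemma cindep2_imp_nonzero: "cindep2 u v \<Longrightarrow> u \<noteq> 0 \<and> v \<noteq> 0"
  unfolding cindep2_def
  by (metis add.left_neutral add.right_neutral one_neq_zero vector_smult_lzero vector_smult_rzero)

lemma cspan2_add: "x \<in> cspan2 u v \<Longrightarrow> y \<in> cspan2 u v \<Longrightarrow> x + y \<in> cspan2 u v"
proof -
  assume "x \<in> cspan2 u v" "y \<in> cspan2 u v"
  then obtain a b a' b' where "x = a *s u + b *s v" "y = a' *s u + b' *s v" by (auto simp: mem_cspan2)
  then have "x + y = (a + a') *s u + (b + b') *s v" by (simp add: vec_eq_iff algebra_simps)
  then show ?thesis unfolding mem_cspan2 by blast
qed

lemma cspan2_smult: "x \<in> cspan2 u v \<Longrightarrow> c *s x \<in> cspan2 u v"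
proof -
  assume "x \<in> cspan2 u v"
  then obtain a b where "x = a *s u + b *s v" by (auto simp: mem_cspan2)
  then have "c *s x = (c * a) *s u + (c * b) *s v" by (simp add: vec_eq_iff algebra_simps)
  then show ?thesis unfolding mem_cspan2 by blast
qed

lemma cspan2_diff: "x \<in> cspan2 u v \<Longrightarrow> y \<in> cspan2 u v \<Longrightarrow> x - y \<in> cspan2 u v"
  using cspan2_add[of x u v "(-1) *s y"] cspan2_smult[of y u v "-1"]
  by (simp add: vector_sneg_minus1[symmetric])

lemma cspan2_generators: "u \<in> cspan2 u v" "v \<in> cspan2 u v"
proof -
  have "u = 1 *s u + 0 *s v" "v = 0 *s u + 1 *s v" by simp_all
  then show "u \<in> cspan2 u v" "v \<in> cspan2 u v" unfolding mem_cspan2 by blast+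
qed

lemma cspan2_subset:
  assumes "x \<in> cspan2 u v" "y \<in> cspan2 u v"
  shows "cspan2 x y \<subseteq> cspan2 u v"
  using assms by (auto simp: mem_cspan2[of _ x y] intro!: cspan2_add cspan2_smult)

lemma smult_eq_imp_eq_inverse:
  fixes z y :: "'a::field^'n"
  assumes "c \<noteq> 0" "c *s z = y"
  shows "z = (1/c) *s y"
  using assms by (auto simp: vector_smult_assoc)

lemma cspan2_eq_if_independent_members:
  assumes p0: "p \<noteq> 0" and p: "p \<in> cspan2 u v" and z: "z \<in> cspan2 u v"
    and indep: "\<nexists>\<kappa>. z = \<kappa> *s p"
  shows "cspan2 u v = cspan2 p z"
proof -
  obtain \<alpha> \<beta> where p_eq: "p = \<alpha> *s u + \<beta> *s v" using p by (auto simp: mem_cspan2)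
  obtain \<alpha>' \<beta>' where z_eq: "z = \<alpha>' *s u + \<beta>' *s v" using z by (auto simp: mem_cspan2)
  define \<Delta> where "\<Delta> = \<alpha> * \<beta>' - \<alpha>' * \<beta>"
  have u: "\<Delta> *s u = \<beta>' *s p - \<beta> *s z" and v: "\<Delta> *s v = \<alpha> *s z - \<alpha>' *s p"
    unfolding p_eq z_eq \<Delta>_def by (simp_all add: vec_eq_iff algebra_simps)
  have "\<Delta> \<noteq> 0"
  proof
    assume "\<Delta> = 0"
    then have "\<beta> *s z = \<beta>' *s p" "\<alpha> *s z = \<alpha>' *s p" using u v by auto
    moreover have "\<alpha> \<noteq> 0 \<or> \<beta> \<noteq> 0" using p0 p_eq by auto
    ultimately obtain \<gamma> \<gamma>' where "\<gamma> \<noteq> 0" "\<gamma> *s z = \<gamma>' *s p" by blast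
    then have "z = (\<gamma>' / \<gamma>) *s p"
      using smult_eq_imp_eq_inverse[of \<gamma> z "\<gamma>' *s p"] by (simp add: vector_smult_assoc)
    then show False using indep by blast
  qed
  then have "u \<in> cspan2 p z" "v \<in> cspan2 p z"
    using smult_eq_imp_eq_inverse[OF _ u] smult_eq_imp_eq_inverse[OF _ v]
    by (simp_all add: cspan2_smult cspan2_diff cspan2_generators)
  then show ?thesis
    using cspan2_subset[OF p z] cspan2_subset[of u p z v] by blast
qed

lemma common_member_of_distinct_cspan2:
  assumes "p \<noteq> 0" "p \<in> cspan2 u v" "p \<in> cspan2 a b" "z \<in> cspan2 u v" "z \<in> cspan2 a b"
    and "cspan2 u v \<noteq> cspan2 a b"
  obtains \<kappa> where "z = \<kappa> *s p"
proof -
  have "cspan2 u v = cspan2 p z" "cspan2 a b = cspan2 p z" if "\<nexists>\<kappa>. z = \<kappa> *s p"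
    using assms that cspan2_eq_if_independent_members by blast+
  with assms(6) that show thesis by blast
qed

lemma cspan2_eq_if_cindep2_members:
  assumes "cindep2 a b" "a \<in> cspan2 u v" "b \<in> cspan2 u v"
  shows "cspan2 u v = cspan2 a b"
proof (rule cspan2_eq_if_independent_members)
  show "a \<noteq> 0" using cindep2_imp_nonzero[OF assms(1)] by simp
  show "\<nexists>\<kappa>. b = \<kappa> *s a"
  proof
    assume "\<exists>\<kappa>. b = \<kappa> *s a"
    then obtain \<kappa> where "b = \<kappa> *s a" by blast
    then have "\<kappa> *s a + (-1) *s b = 0" by (simp add: vec_eq_iff)
    then show False using assms(1) unfolding cindep2_def by fastforce
  qed
qed (use assms in auto)

lemma cindep2_extend:
  assumes "cindep2 u v" "y \<notin> cspan2 u v" "A *s u + B *s v + C *s y = 0"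
  shows "A = 0 \<and> B = 0 \<and> C = 0"
proof -
  have "C = 0"
  proof (rule ccontr)
    assume C: "C \<noteq> 0"
    have "C *s y = - (A *s u + B *s v)"
      using assms(3) by (simp add: add_eq_0_iff2 add.commute)
    also have "\<dots> = (-A) *s u + (-B) *s v" by (simp add: vec_eq_iff)
    finally have "C *s y = (-A) *s u + (-B) *s v" .
    then have "y = (1/C) *s ((-A) *s u + (-B) *s v)" by (rule smult_eq_imp_eq_inverse[OF C])
    then show False using assms(2) cspan2_smult cspan2_add cspan2_generators by metis
  qed
  then show ?thesis using assms(1,3) unfolding cindep2_def by auto
qed

definition det4 :: "complex^4 \<Rightarrow> complex^4 \<Rightarrow> complex^4 \<Rightarrow> complex^4 \<Rightarrow> complex" where
  "det4 x y z w = x$1 * y$2 * z$3 * w$4 - x$1 * y$2 * z$4 * w$3 - x$1 * y$3 * z$2 * w$4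
    + x$1 * y$3 * z$4 * w$2 + x$1 * y$4 * z$2 * w$3 - x$1 * y$4 * z$3 * w$2 - x$2 * y$1 * z$3 * w$4
    + x$2 * y$1 * z$4 * w$3 + x$2 * y$3 * z$1 * w$4 - x$2 * y$3 * z$4 * w$1 - x$2 * y$4 * z$1 * w$3
    + x$2 * y$4 * z$3 * w$1 + x$3 * y$1 * z$2 * w$4 - x$3 * y$1 * z$4 * w$2 - x$3 * y$2 * z$1 * w$4
    + x$3 * y$2 * z$4 * w$1 + x$3 * y$4 * z$1 * w$2 - x$3 * y$4 * z$2 * w$1 - x$4 * y$1 * z$2 * w$3
    + x$4 * y$1 * z$3 * w$2 + x$4 * y$2 * z$1 * w$3 - x$4 * y$2 * z$3 * w$1 - x$4 * y$3 * z$1 * w$2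
    + x$4 * y$3 * z$2 * w$1"

lemma cramer_identity:
  "det4 w v a b *s u + det4 u w a b *s v + det4 u v w b *s a + det4 u v a w *s b = det4 u v a b *s w"
  unfolding vec_eq_iff forall_4 by (simp add: det4_def algebra_simps)

lemma det4_linear:
  "det4 u v (x + y) b = det4 u v x b + det4 u v y b"
  "det4 u v (c *s x) b = c * det4 u v x b"
  "det4 u v a (x + y) = det4 u v a x + det4 u v a y"
  "det4 u v a (c *s x) = c * det4 u v a x"
  by (simp_all add: det4_def algebra_simps)

lemma det4_alternating:
  "det4 u v u b = 0" "det4 u v v b = 0" "det4 u v b b = 0" "det4 u v a u = 0" "det4 u v a v = 0"
  by (simp_all add: det4_def algebra_simps)

lemma det4_swap: "det4 u v x y = - det4 u v y x"
  by (simp add: det4_def algebra_simps)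

lemma det4_axes: "det4 (axis 1 1) (axis 2 1) (axis 3 1) (axis 4 1) = 1"
  by (simp add: det4_def axis_def)

lemma continuous_at_det4:
  assumes "\<And>i. continuous (at 0) (\<lambda>t. x1 t $ i)" "\<And>i. continuous (at 0) (\<lambda>t. x2 t $ i)"
    "\<And>i. continuous (at 0) (\<lambda>t. x3 t $ i)" "\<And>i. continuous (at 0) (\<lambda>t. x4 t $ i)"
  shows "continuous (at 0) (\<lambda>t. det4 (x1 t) (x2 t) (x3 t) (x4 t))"
  unfolding det4_def by (intro continuous_add continuous_diff continuous_mult assms)

lemma det4_ne_0_if_not_in_cspan2:
  assumes uv: "cindep2 u v" and y: "y \<notin> cspan2 u v"
  obtains e where "det4 u v y e \<noteq> 0"
proof -
  have "det4 x z w q = 0" if "\<And>e. det4 u v y e = 0" for x z w q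
  proof -
    have "det4 w v y q *s u + det4 u w y q *s v + det4 u v w q *s y = 0" for w q
      using cramer_identity[of w v y q u] that by simp
    then have uv_w: "det4 u v w q = 0" for w q
      using cindep2_extend[OF uv y] by blast
    have "det4 w v x q *s u + det4 u w x q *s v = 0" for w x q
      using cramer_identity[of w v x q u] uv_w by simp
    then have "det4 w v x q = 0" for w x q
      using uv unfolding cindep2_def by blast
    then have "det4 x z w q *s v = 0"
      using cramer_identity[of z v w q x] by simp
    then show ?thesis using cindep2_imp_nonzero[OF uv] by simp
  qed
  then show thesis using det4_axes that by (metis zero_neq_one)
qed

section \<open>The degenerating pair of lines\<close>

lemma mult_along_line_in_the_limit:
  assumes F: "F \<in> poly_family"
    and a_cont: "\<And>i. continuous (at 0) (\<lambda>t. a t $ i)"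
    and b_cont: "\<And>i. continuous (at 0) (\<lambda>t. b t $ i)"
    and ev: "eventually (\<lambda>t. cindep2 (a t) (b t) \<and> mult_along_line (F t) (a t) (b t) k) (at 0)"
  shows "mult_along_line (F 0) (a 0) (b 0) k"
  unfolding mult_along_line_def mult_at_least_def
proof (intro ballI allI impI)
  fix x "is" assume x: "x \<in> cspan2 (a 0) (b 0) - {0}" and len: "length (is::4 list) < k"
  obtain \<alpha> \<beta> where x_eq: "x = \<alpha> *s a 0 + \<beta> *s b 0" using x by (auto simp: cspan2_def)
  have "\<alpha> \<noteq> 0 \<or> \<beta> \<noteq> 0" using x x_eq by auto
  have "iter_pderiv is (F 0) (\<alpha> *s a 0 + \<beta> *s b 0) = 0"
  proof (rule eq_if_continuous_at_and_eventually_eq[OF _ at_neq_bot,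
        where g = "\<lambda>t. iter_pderiv is (F t) (\<alpha> *s a t + \<beta> *s b t)"])
    show "continuous (at 0) (\<lambda>t. iter_pderiv is (F t) (\<alpha> *s a t + \<beta> *s b t))"
      by (intro poly_family_continuous_at[OF poly_family_iter_pderiv[OF F]])
        (simp add: a_cont b_cont continuous_intros)
    show "eventually (\<lambda>t. iter_pderiv is (F t) (\<alpha> *s a t + \<beta> *s b t) = 0) (at 0)"
    proof (rule eventually_mono[OF ev], elim conjE)
      fix t assume "cindep2 (a t) (b t)" "mult_along_line (F t) (a t) (b t) k"
      moreover have "\<alpha> *s a t + \<beta> *s b t \<in> cspan2 (a t) (b t)" by (auto simp: cspan2_def)
      ultimately show "iter_pderiv is (F t) (\<alpha> *s a t + \<beta> *s b t) = 0"
        using \<open>\<alpha> \<noteq> 0 \<or> \<beta> \<noteq> 0\<close> len unfolding mult_along_line_def mult_at_least_def cindep2_def by blast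
    qed
  qed
  then show "iter_pderiv is (F 0) x = 0" by (simp add: x_eq)
qed

lemma det4_eq_0_if_cspan2_meet:
  assumes "p \<noteq> 0" "p \<in> cspan2 u v" "p \<in> cspan2 a b"
  shows "det4 u v a b = 0"
proof -
  obtain \<alpha> \<beta> where pu: "p = \<alpha> *s u + \<beta> *s v" using assms(2) unfolding mem_cspan2 by blast
  obtain \<gamma> \<delta> where pa: "p = \<gamma> *s a + \<delta> *s b" using assms(3) unfolding mem_cspan2 by blast
  show ?thesis
  proof (cases "\<gamma> = 0")
    case False
    have "\<gamma> *s a = \<alpha> *s u + \<beta> *s v + (- \<delta>) *s b"
      using pu pa by (simp add: vec_eq_iff algebra_simps)
    then have "a = (1/\<gamma>) *s (\<alpha> *s u + \<beta> *s v + (- \<delta>) *s b)" by (rule smult_eq_imp_eq_inverse[OF False])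
    then show ?thesis by (simp only: det4_linear det4_alternating mult_zero_right add_0_right)
  next
    case True
    then have "\<delta> \<noteq> 0" using pa assms(1) by auto
    moreover have "\<delta> *s b = \<alpha> *s u + \<beta> *s v" using pu pa True by simp
    ultimately have "b = (1/\<delta>) *s (\<alpha> *s u + \<beta> *s v)" by (rule smult_eq_imp_eq_inverse)
    then show ?thesis by (simp only: det4_linear det4_alternating mult_zero_right add_0_right)
  qed
qed

lemma exists_det4_ne_0:
  assumes "cindep2 u v" "cindep2 a b" "cspan2 u v \<noteq> cspan2 a b"
  obtains e where "det4 u v e b \<noteq> 0 \<or> det4 u v a e \<noteq> 0"
proof -
  have "a \<notin> cspan2 u v \<or> b \<notin> cspan2 u v"
    using cspan2_eq_if_cindep2_members[OF assms(2)] assms(3) by blast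
  then show thesis
  proof
    assume "a \<notin> cspan2 u v"
    then show thesis using det4_ne_0_if_not_in_cspan2[OF assms(1)] that by blast
  next
    assume "b \<notin> cspan2 u v"
    then obtain e where "det4 u v b e \<noteq> 0" using det4_ne_0_if_not_in_cspan2[OF assms(1)] by blast
    then have "det4 u v e b \<noteq> 0" by (subst det4_swap) simp
    then show thesis using that by blast
  qed
qed

lemma cramer_point_mem_cspan2:
  fixes u v a b w :: "complex^4"
  defines "z \<equiv> det4 u v w b *s a + det4 u v a w *s b"
  shows "z \<in> cspan2 a b" and "z - det4 u v a b *s w \<in> cspan2 u v"
proof -
  show "z \<in> cspan2 a b" unfolding z_def mem_cspan2 by blast
  have "z - det4 u v a b *s w = (- det4 w v a b) *s u + (- det4 u w a b) *s v"
    using cramer_identity[of w v a b u] unfolding z_def by (simp add: vec_eq_iff algebra_simps)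
  then show "z - det4 u v a b *s w \<in> cspan2 u v" unfolding mem_cspan2 by blast
qed

lemma eventually_nonzero_at:
  fixes y :: "complex \<Rightarrow> complex^4"
  assumes "\<And>i. continuous (at 0) (\<lambda>t. y t $ i)" "y 0 \<noteq> 0"
  shows "eventually (\<lambda>t. y t \<noteq> 0) (at 0)"
proof -
  obtain i where i: "y 0 $ i \<noteq> 0" using assms(2) by (auto simp: vec_eq_iff)
  have "((\<lambda>t. y t $ i) \<longlongrightarrow> y 0 $ i) (at 0)" using assms(1)[of i] continuous_at by blast
  then have "eventually (\<lambda>t. y t $ i \<noteq> 0) (at 0)" using tendsto_imp_eventually_ne i by blast
  then show ?thesis by (rule eventually_mono) auto
qed

lemma dir_deriv_eq_0_off_hyperplane:
  assumes e: "\<phi> e \<noteq> 0"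
    and off: "\<And>w. \<phi> w \<noteq> 0 \<Longrightarrow> dir_deriv f j x w = 0"
    and \<phi>_affine: "\<And>w \<epsilon>. \<phi> (w + \<epsilon> *s e) = \<phi> w + \<epsilon> * \<phi> e"
  shows "dir_deriv f j x w = 0"
proof (cases "\<phi> w = 0")
  case True
  have "dir_deriv f j x (w + 0 *s e) = 0"
  proof (rule eq_if_continuous_at_and_eventually_eq[OF _ at_neq_bot,
        where g = "\<lambda>\<epsilon>. dir_deriv f j x (w + \<epsilon> *s e)"])
    show "continuous (at 0) (\<lambda>\<epsilon>. dir_deriv f j x (w + \<epsilon> *s e))"
      by (intro poly_family_continuous_at[OF poly_family_dir_deriv_direction, where y = "\<lambda>\<epsilon>. w + \<epsilon> *s e"])
        (simp add: continuous_intros)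
    have "eventually (\<lambda>\<epsilon>::complex. \<epsilon> \<noteq> 0) (at 0)"
      by (simp add: eventually_at_filter)
    then show "eventually (\<lambda>\<epsilon>. dir_deriv f j x (w + \<epsilon> *s e) = 0) (at 0)"
      by (rule eventually_mono) (simp add: off \<phi>_affine True e)
  qed
  then show ?thesis by simp
qed (rule off)

lemma dir_deriv_at_meeting_point:
  assumes F: "F \<in> poly_family"
    and a_cont: "\<And>i. continuous (at 0) (\<lambda>t. a t $ i)"
    and b_cont: "\<And>i. continuous (at 0) (\<lambda>t. b t $ i)"
    and r_0: "cindep2 (a 0) (b 0)"
    and ev: "eventually (\<lambda>t. cspan2 u v \<inter> cspan2 (a t) (b t) = {0}
               \<and> mult_along_line (F t) u v m \<and> mult_along_line (F t) (a t) (b t) n) (at 0)"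
    and distinct: "cspan2 u v \<noteq> cspan2 (a 0) (b 0)"
    and p: "p \<noteq> 0" "p \<in> cspan2 u v" "p \<in> cspan2 (a 0) (b 0)"
    and w: "det4 u v w (b 0) \<noteq> 0 \<or> det4 u v (a 0) w \<noteq> 0"
    and j: "j < m + n"
  shows "dir_deriv (F 0) j p w = 0"
proof -
  \<comment> \<open>z t lies on r_t and z t - D t *s w on l; as D t \<rightarrow> 0 both tend to z 0, a multiple of p.\<close>
  define z where "z t = det4 u v w (b t) *s a t + det4 u v (a t) w *s b t" for t
  define D where "D t = det4 u v (a t) (b t)" for t
  have z_r: "z t \<in> cspan2 (a t) (b t)" and z_l: "z t - D t *s w \<in> cspan2 u v" for t
    using cramer_point_mem_cspan2 by (simp_all add: z_def D_def)
  have D_cont: "continuous (at 0) D"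
    unfolding D_def by (rule continuous_at_det4) (simp_all add: a_cont b_cont)
  have z_cont: "continuous (at 0) (\<lambda>t. z t $ i)" for i
    unfolding z_def
    using continuous_at_det4[of "\<lambda>t. u" "\<lambda>t. v" "\<lambda>t. w" b] continuous_at_det4[of "\<lambda>t. u" "\<lambda>t. v" a "\<lambda>t. w"]
    by (simp add: a_cont b_cont continuous_intros)
  have zD_cont: "continuous (at 0) (\<lambda>t. (z t - D t *s w) $ i)" for i
    using z_cont[of i] D_cont by (simp add: continuous_intros)
  have D_0: "D 0 = 0" using det4_eq_0_if_cspan2_meet[OF p] by (simp add: D_def)
  have z_0: "z 0 \<noteq> 0" using r_0 w unfolding cindep2_def z_def by blast
  obtain \<kappa> where \<kappa>: "z 0 = \<kappa> *s p"
    using common_member_of_distinct_cspan2[OF p _ z_r[of 0] distinct] z_l[of 0] D_0 by auto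
  then have "\<kappa> \<noteq> 0" using z_0 by auto
  have "eventually (\<lambda>t. z t \<noteq> 0 \<and> z t - D t *s w \<noteq> 0) (at 0)"
    using eventually_nonzero_at[OF z_cont z_0] eventually_nonzero_at[OF zD_cont] z_0 D_0
    by (simp add: eventually_conj)
  then have ev_line: "eventually (\<lambda>t. - D t \<noteq> 0 \<and> mult_at_least (F t) ((1/\<kappa>) *s z t) n
      \<and> mult_at_least (F t) ((1/\<kappa>) *s z t + (- D t) *s ((1/\<kappa>) *s w)) m) (at 0)"
  proof (rule eventually_mono[OF eventually_conj[OF ev]], elim conjE, intro conjI)
    fix t
    assume skew: "cspan2 u v \<inter> cspan2 (a t) (b t) = {0}"
      and l_t: "mult_along_line (F t) u v m" and r_t: "mult_along_line (F t) (a t) (b t) n"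
      and "z t \<noteq> 0" "z t - D t *s w \<noteq> 0"
    show "- D t \<noteq> 0"
    proof
      assume "- D t = 0"
      then have "z t \<in> cspan2 u v \<inter> cspan2 (a t) (b t)" using z_l[of t] z_r[of t] by simp
      with skew \<open>z t \<noteq> 0\<close> show False by blast
    qed
    show "mult_at_least (F t) ((1/\<kappa>) *s z t) n"
      by (rule mult_along_line_imp_mult_at_least[OF r_t cspan2_smult[OF z_r]])
        (use \<open>z t \<noteq> 0\<close> \<open>\<kappa> \<noteq> 0\<close> in simp)
    have "mult_at_least (F t) ((1/\<kappa>) *s (z t - D t *s w)) m"
      by (rule mult_along_line_imp_mult_at_least[OF l_t cspan2_smult[OF z_l]])
        (use \<open>z t - D t *s w \<noteq> 0\<close> \<open>\<kappa> \<noteq> 0\<close> in \<open>simp only: vector_mul_eq_0 divide_eq_0_iff\<close>, simp)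
    moreover have "(1/\<kappa>) *s z t + (- D t) *s ((1/\<kappa>) *s w) = (1/\<kappa>) *s (z t - D t *s w)"
      by (simp add: vec_eq_iff algebra_simps)
    ultimately show "mult_at_least (F t) ((1/\<kappa>) *s z t + (- D t) *s ((1/\<kappa>) *s w)) m"
      by simp
  qed
  have "continuous (at 0) (\<lambda>t. ((1/\<kappa>) *s z t) $ i)" for i
    using continuous_mult[OF continuous_const z_cont[of i], of "1/\<kappa>"] by simp
  moreover have "continuous (at 0) (\<lambda>t. - D t)" using D_cont by (simp add: continuous_intros)
  ultimately have "dir_deriv (F 0) j ((1/\<kappa>) *s z 0) ((1/\<kappa>) *s w) = 0"
    using dir_derivs_vanish_in_the_limit[OF F _ _ _ ev_line j] D_0 by simp
  then show ?thesis using \<kappa> \<open>\<kappa> \<noteq> 0\<close> by (simp add: dir_deriv_smult vector_smult_assoc)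
qed

lemma mult_at_meeting_point:
  assumes F: "F \<in> poly_family"
    and a_cont: "\<And>i. continuous (at 0) (\<lambda>t. a t $ i)"
    and b_cont: "\<And>i. continuous (at 0) (\<lambda>t. b t $ i)"
    and l: "cindep2 u v" and r_0: "cindep2 (a 0) (b 0)"
    and ev: "eventually (\<lambda>t. cspan2 u v \<inter> cspan2 (a t) (b t) = {0}
               \<and> mult_along_line (F t) u v m \<and> mult_along_line (F t) (a t) (b t) n) (at 0)"
    and distinct: "cspan2 u v \<noteq> cspan2 (a 0) (b 0)"
    and p: "p \<noteq> 0" "p \<in> cspan2 u v" "p \<in> cspan2 (a 0) (b 0)"
  shows "mult_at_least (F 0) p (m + n)"
proof (rule mult_at_least_if_dir_derivs_vanish[OF F])
  fix w j assume j: "j < m + n"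
  note generic = dir_deriv_at_meeting_point[OF F a_cont b_cont r_0 ev distinct p _ j]
  obtain e where "det4 u v e (b 0) \<noteq> 0 \<or> det4 u v (a 0) e \<noteq> 0"
    using exists_det4_ne_0[OF l r_0 distinct] by blast
  then show "dir_deriv (F 0) j p w = 0"
  proof
    assume "det4 u v e (b 0) \<noteq> 0"
    then show ?thesis
      by (rule dir_deriv_eq_0_off_hyperplane[where \<phi> = "\<lambda>w. det4 u v w (b 0)"])
        (simp_all add: generic det4_linear)
  next
    assume "det4 u v (a 0) e \<noteq> 0"
    then show ?thesis
      by (rule dir_deriv_eq_0_off_hyperplane[where \<phi> = "\<lambda>w. det4 u v (a 0) w"])
        (simp_all add: generic det4_linear)
  qed
qed

theorem lemma4p1:
  fixes \<rho> :: real and u v p :: "complex^4" and a b :: "complex \<Rightarrow> complex^4"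
    and d m n :: nat and c :: "(4 \<Rightarrow> nat) \<Rightarrow> complex \<Rightarrow> complex"
  assumes rho: "\<rho> > 0"
    and l_line: "cindep2 u v"
    and r_line: "\<And>t. t \<in> ball 0 \<rho> \<Longrightarrow> cindep2 (a t) (b t)"
    and a_an: "\<And>i. (\<lambda>t. a t $ i) holomorphic_on ball 0 \<rho>"
    and b_an: "\<And>i. (\<lambda>t. b t $ i) holomorphic_on ball 0 \<rho>"
    and skew: "\<And>t. t \<in> ball 0 \<rho> - {0} \<Longrightarrow> cspan2 u v \<inter> cspan2 (a t) (b t) = {0}"
    and distinct0: "cspan2 u v \<noteq> cspan2 (a 0) (b 0)"
    and p_nz: "p \<noteq> 0" and p_l: "p \<in> cspan2 u v" and p_r: "p \<in> cspan2 (a 0) (b 0)"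
    and mpos: "m > 0" and npos: "n > 0"
    and c_an: "\<And>\<alpha>. c \<alpha> holomorphic_on ball 0 \<rho>"
    and mult_l: "\<And>t. t \<in> ball 0 \<rho> - {0} \<Longrightarrow> mult_along_line (hpoly_eval d (\<lambda>\<alpha>. c \<alpha> t)) u v m"
    and mult_r: "\<And>t. t \<in> ball 0 \<rho> - {0} \<Longrightarrow> mult_along_line (hpoly_eval d (\<lambda>\<alpha>. c \<alpha> t)) (a t) (b t) n"
  shows "mult_along_line (hpoly_eval d (\<lambda>\<alpha>. c \<alpha> 0)) u v m
       \<and> mult_along_line (hpoly_eval d (\<lambda>\<alpha>. c \<alpha> 0)) (a 0) (b 0) n
       \<and> mult_at_least (hpoly_eval d (\<lambda>\<alpha>. c \<alpha> 0)) p (m + n)"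
proof -
  define F where "F = (\<lambda>t. hpoly_eval d (\<lambda>\<alpha>. c \<alpha> t))"
  have cont_0: "continuous (at 0) f" if "f holomorphic_on ball 0 \<rho>" for f :: "complex \<Rightarrow> complex"
    using holomorphic_on_imp_continuous_on[OF that] rho by (simp add: continuous_on_eq_continuous_at)
  have F: "F \<in> poly_family"
    unfolding F_def by (rule poly_family_hpoly_eval[OF cont_0[OF c_an]])
  have punctured: "eventually (\<lambda>t. t \<in> ball 0 \<rho> - {0}) (at 0)"
    using rho by (auto simp: eventually_at dist_commute intro!: exI[of _ \<rho>])
  have ev: "eventually (\<lambda>t. cspan2 u v \<inter> cspan2 (a t) (b t) = {0}
      \<and> mult_along_line (F t) u v m \<and> mult_along_line (F t) (a t) (b t) n) (at 0)"
    by (rule eventually_mono[OF punctured]) (simp add: F_def skew mult_l mult_r)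
  have r_0: "cindep2 (a 0) (b 0)" using r_line rho by simp
  have "mult_along_line (F 0) u v m"
    by (rule mult_along_line_in_the_limit[OF F, where a = "\<lambda>t. u" and b = "\<lambda>t. v"])
      (use l_line in \<open>simp_all add: eventually_mono[OF ev]\<close>)
  moreover have "mult_along_line (F 0) (a 0) (b 0) n"
    by (rule mult_along_line_in_the_limit[OF F cont_0[OF a_an] cont_0[OF b_an]])
      (rule eventually_mono[OF eventually_conj[OF punctured ev]], simp add: r_line)
  moreover have "mult_at_least (F 0) p (m + n)"
    by (rule mult_at_meeting_point[OF F cont_0[OF a_an] cont_0[OF b_an] l_line r_0 ev distinct0
          p_nz p_l p_r])
  ultimately show ?thesis by (simp add: F_def)
qed

end
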